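(* Let $A$ be a bialgebra over a commutative ring $\Bbbk$ with product $\mu$, unit $1_A$, coproduct $\Delta a=a^{(1)}\otimes a^{(2)}$ and counit $\varepsilon$. Let $\mathcal{O}^A$ be the operad with multiplication with $\mathcal{O}^A(n)=\mathrm{Hom}_\Bbbk(A^{\otimes n},\Bbbk)$, partial compositions, for $f\in\mathcal{O}^A(m)$, $g\in\mathcal{O}^A(n)$, $$(f\circ_i g)(a_1\otimes\dots\otimes a_{m+n-1})=f\big(a_1\otimes\dots\otimes a_{i-1}\otimes a_i^{(1)}\cdots a_{i+n-1}^{(1)}\,g(a_i^{(2)}\otimes\dots\otimes a_{i+n-1}^{(2)})\otimes a_{i+n}\otimes\dots\otimes a_{m+n-1}\big),$$ identity $\varepsilon$, multiplication $\varepsilon\circ\mu$ and $e=\mathrm{id}_\Bbbk$; its cochain complex is the dual $(BA)^\vee$ of the bar construction, with cohomology $\mathrm{Ext}^*_A(\Bbbk,\Bbbk)$, which thus carries a Gerstenhaber algebra structure. Let $\mathcal{E}nd(A)$ be the operad with multiplication $\mathcal{E}nd(A)(n)=\mathrm{Hom}_\Bbbk(A^{\otimes n},A)$, $\gamma(f;g_1,\dots,g_n)=f\circ(g_1\otimes\dots\otimes g_n)$, identity $\mathrm{id}_A$, multiplication $\mu$, $e$ the unit $\Bbbk\to A$; its cochain complex is the Hochschild cochain complex $\mathcal{C}^*(A,A)$, so $HH^*(A,A)$ is a Gerstenhaber algebra. Then the maps $lift:\mathrm{Hom}(A^{\otimes n},\Bbbk)\to\mathrm{Hom}(A^{\otimes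 n},A)$, $lift(f)(a_1\otimes\dots\otimes a_n)=a_1^{(1)}\cdots a_n^{(1)}f(a_1^{(2)}\otimes\dots\otimes a_n^{(2)})$, induce an injective morphism of Gerstenhaber algebras $\mathrm{Ext}^*_A(\Bbbk,\Bbbk)\hookrightarrow HH^*(A,A)$; i.e. $\mathrm{Ext}^*_A(\Bbbk,\Bbbk)$ is a sub Gerstenhaber algebra of $HH^*(A,A)$.
   Context: A (non-symmetric, $\Bbbk$-linear) operad $O$ consists of $\Bbbk$-modules $O(n)$, $n\ge0$, an identity $id\in O(1)$ and associative unital partial compositions $\circ_i:O(m)\otimes O(n)\to O(m+n-1)$. An operad with multiplication has $\mu\in O(2)$, $e\in O(0)$ with $\mu\circ_1\mu=\mu\circ_2\mu$, $\mu\circ_1e=id=\mu\circ_2e$. Its cochain complex $\mathcal{C}^*(O)$: $O(n)$ in degree $n$, $df=\mu\circ_2f+\sum_{i=1}^n(-1)^if\circ_i\mu+(-1)^{n+1}\mu\circ_1f$. Cup product $f\cup g=(\mu\circ_1f)\circ_{m+1}g$ and bracket $\{f,g\}=f\bar\circ g-(-1)^{(m-1)(n-1)}g\bar\circ f$, $f\bar\circ g=(-1)^{(m-1)(n-1)}\sum_{i=1}^m(-1)^{(n-1)(i-1)}f\circ_ig$, make $H(\mathcal{C}^*(O))$ a Gerstenhaber algebra; morphisms of operads with multiplication induce morphisms of Gerstenhaber algebras. *)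

theory Defs
  imports Main "HOL.Modules" "HOL-Library.Poly_Mapping" "HOL-Library.Function_Algebras"
begin

section \<open>Tensor powers of A, presented by generators and relations\<close>

text \<open>Elements of the free k-module on tuples (lists) of elements of A.  The
  tuple [a1,...,an] stands for the pure tensor a1 (x) ... (x) an.\<close>

definition pt :: "'a list \<Rightarrow> ('a list \<Rightarrow>\<^sub>0 'k::comm_ring_1)" where
  "pt xs = Poly_Mapping.single xs 1"

text \<open>The k-submodule of multilinearity relations (k acts on A by sm).\<close>
inductive_set tnull :: "('k::comm_ring_1 \<Rightarrow> 'a::ab_group_add \<Rightarrow> 'a) \<Rightarrow> ('a list \<Rightarrow>\<^sub>0 'k) set"
  for sm where
  tnull_zero: "0 \<in> tnull sm"
| tnull_add_rel: "Poly_Mapping.single (us @ (a + b) # vs) c - Poly_Mapping.single (us @ a # vs) c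
      - Poly_Mapping.single (us @ b # vs) c \<in> tnull sm"
| tnull_smul_rel: "Poly_Mapping.single (us @ sm r a # vs) c - Poly_Mapping.single (us @ a # vs) (r * c)
      \<in> tnull sm"
| tnull_sum: "x \<in> tnull sm \<Longrightarrow> y \<in> tnull sm \<Longrightarrow> x + y \<in> tnull sm"

text \<open>Equality in the tensor power A (x) ... (x) A (over k).\<close>
definition teq :: "('k::comm_ring_1 \<Rightarrow> 'a::ab_group_add \<Rightarrow> 'a) \<Rightarrow> ('a list \<Rightarrow>\<^sub>0 'k) \<Rightarrow> ('a list \<Rightarrow>\<^sub>0 'k) \<Rightarrow> bool" where
  "teq sm x y \<longleftrightarrow> x - y \<in> tnull sm"

text \<open>The coproduct is given in Sweedler form: cop a is a finite list of pairs (x,y)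
  with Delta a = sum of x (x) y over the list.  Only its class in A (x) A matters.\<close>

definition dsum :: "('a \<Rightarrow> ('a \<times> 'a) list) \<Rightarrow> 'a \<Rightarrow> ('a list \<Rightarrow>\<^sub>0 'k::comm_ring_1)" where
  "dsum cop a = sum_list (map (\<lambda>(x, y). pt [x, y]) (cop a))"

definition bialgebra ::
  "('k::comm_ring_1 \<Rightarrow> 'a::ring_1 \<Rightarrow> 'a) \<Rightarrow> ('a \<Rightarrow> ('a \<times> 'a) list) \<Rightarrow> ('a \<Rightarrow> 'k) \<Rightarrow> bool" where
  "bialgebra sm cop eps \<longleftrightarrow>
     \<comment> \<open>A is a k-algebra\<close>
     module sm \<and>
     (\<forall>r a b. sm r (a * b) = sm r a * b \<and> sm r (a * b) = a * sm r b) \<and>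
     \<comment> \<open>Delta is k-linear\<close>
     (\<forall>a b. teq sm (dsum cop (a + b)) (dsum cop a + dsum cop b)) \<and>
     (\<forall>r a. teq sm (dsum cop (sm r a))
              (sum_list (map (\<lambda>(x, y). Poly_Mapping.single [x, y] r) (cop a)))) \<and>
     \<comment> \<open>coassociativity\<close>
     (\<forall>a. teq sm
        (sum_list (map (\<lambda>(x, y). sum_list (map (\<lambda>(u, v). pt [u, v, y]) (cop x))) (cop a)))
        (sum_list (map (\<lambda>(x, y). sum_list (map (\<lambda>(u, v). pt [x, u, v]) (cop y))) (cop a)))) \<and>
     \<comment> \<open>counit\<close>
     (\<forall>a. sum_list (map (\<lambda>(x, y). sm (eps x) y) (cop a)) = a) \<and>
     (\<forall>a. sum_list (map (\<lambda>(x, y). sm (eps y) x) (cop a)) = a) \<and>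
     \<comment> \<open>epsilon is a k-algebra map\<close>
     (\<forall>a b. eps (a + b) = eps a + eps b) \<and>
     (\<forall>r a. eps (sm r a) = r * eps a) \<and>
     (\<forall>a b. eps (a * b) = eps a * eps b) \<and>
     eps 1 = 1 \<and>
     \<comment> \<open>Delta is an algebra map\<close>
     (\<forall>a b. teq sm (dsum cop (a * b))
        (sum_list (map (\<lambda>(x, y). sum_list (map (\<lambda>(u, v). pt [x * u, y * v]) (cop b))) (cop a)))) \<and>
     teq sm (dsum cop 1) (pt [1, 1])"

text \<open>An element of Hom(A^{(x)n},M) is represented by the k-multilinear function on
  lists of length n, extended by 0 to lists of other lengths.\<close>

definition cochain ::
  "('k::comm_ring_1 \<Rightarrow> 'a::ab_group_add \<Rightarrow> 'a) \<Rightarrow> ('k \<Rightarrow> 'm::ab_group_add \<Rightarrow> 'm) \<Rightarrow> nat \<Rightarrow> ('a list \<Rightarrow> 'm) \<Rightarrow> bool" where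
  "cochain sm sc n f \<longleftrightarrow>
     (\<forall>xs. length xs \<noteq> n \<longrightarrow> f xs = 0) \<and>
     (\<forall>us vs a b. length us + length vs + 1 = n \<longrightarrow>
        f (us @ (a + b) # vs) = f (us @ a # vs) + f (us @ b # vs)) \<and>
     (\<forall>us vs r a. length us + length vs + 1 = n \<longrightarrow>
        f (us @ sm r a # vs) = sc r (f (us @ a # vs)))"

section \<open>Generic cochain complex, cup product and bracket of an operad with multiplication\<close>

text \<open>cmp m n i f g stands for f \<circ>_i g with f in O(m), g in O(n).\<close>

definition sgnc :: "int \<Rightarrow> 'c::ab_group_add \<Rightarrow> 'c" where
  "sgnc k x = (if even k then x else - x)"

definition opd :: "(nat \<Rightarrow> nat \<Rightarrow> nat \<Rightarrow> 'c \<Rightarrow> 'c \<Rightarrow> 'c) \<Rightarrow> 'c \<Rightarrow> nat \<Rightarrow> 'c \<Rightarrow> 'c::ab_group_add" where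
  "opd cmp mu n f = cmp 2 n 2 mu f + (\<Sum>i\<in>{1..n}. sgnc (int i) (cmp n 2 i f mu))
       + sgnc (int n + 1) (cmp 2 n 1 mu f)"

definition opcup :: "(nat \<Rightarrow> nat \<Rightarrow> nat \<Rightarrow> 'c \<Rightarrow> 'c \<Rightarrow> 'c) \<Rightarrow> 'c \<Rightarrow> nat \<Rightarrow> nat \<Rightarrow> 'c \<Rightarrow> 'c \<Rightarrow> 'c" where
  "opcup cmp mu m n f g = cmp (m + 1) n (m + 1) (cmp 2 m 1 mu f) g"

definition opbar :: "(nat \<Rightarrow> nat \<Rightarrow> nat \<Rightarrow> 'c \<Rightarrow> 'c \<Rightarrow> 'c) \<Rightarrow> nat \<Rightarrow> nat \<Rightarrow> 'c \<Rightarrow> 'c \<Rightarrow> 'c::ab_group_add" where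
  "opbar cmp m n f g = sgnc ((int m - 1) * (int n - 1))
      (\<Sum>i\<in>{1..m}. sgnc ((int n - 1) * (int i - 1)) (cmp m n i f g))"

definition opbr :: "(nat \<Rightarrow> nat \<Rightarrow> nat \<Rightarrow> 'c \<Rightarrow> 'c \<Rightarrow> 'c) \<Rightarrow> nat \<Rightarrow> nat \<Rightarrow> 'c \<Rightarrow> 'c \<Rightarrow> 'c::ab_group_add" where
  "opbr cmp m n f g = opbar cmp m n f g - sgnc ((int m - 1) * (int n - 1)) (opbar cmp n m g f)"

text \<open>Cocycles and cohomologous cocycles (equality in H^n); P n is the predicate
  \<open>element of O(n)\<close>.\<close>

definition cocyc :: "(nat \<Rightarrow> 'c \<Rightarrow> bool) \<Rightarrow> (nat \<Rightarrow> nat \<Rightarrow> nat \<Rightarrow> 'c \<Rightarrow> 'c \<Rightarrow> 'c) \<Rightarrow> 'c \<Rightarrow> nat \<Rightarrow> 'c::ab_group_add \<Rightarrow> bool" where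
  "cocyc P cmp mu n f \<longleftrightarrow> P n f \<and> opd cmp mu n f = 0"

definition cohom :: "(nat \<Rightarrow> 'c \<Rightarrow> bool) \<Rightarrow> (nat \<Rightarrow> nat \<Rightarrow> nat \<Rightarrow> 'c \<Rightarrow> 'c \<Rightarrow> 'c) \<Rightarrow> 'c \<Rightarrow> nat \<Rightarrow> 'c \<Rightarrow> 'c::ab_group_add \<Rightarrow> bool" where
  "cohom P cmp mu n f g \<longleftrightarrow>
     (if n = 0 then f = g else (\<exists>h. P (n - 1) h \<and> f - g = opd cmp mu (n - 1) h))"

definition swsum :: "('a \<Rightarrow> ('a \<times> 'a) list) \<Rightarrow> 'a list \<Rightarrow> (('a \<times> 'a) list \<Rightarrow> 'b::monoid_add) \<Rightarrow> 'b" where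
  "swsum cop as F = sum_list (map F (product_lists (map cop as)))"

text \<open>The operad O^A, O^A(n) = Hom(A^{(x)n}, k).\<close>
definition OA_comp :: "('k::comm_ring_1 \<Rightarrow> 'a::ring_1 \<Rightarrow> 'a) \<Rightarrow> ('a \<Rightarrow> ('a \<times> 'a) list)
    \<Rightarrow> nat \<Rightarrow> nat \<Rightarrow> nat \<Rightarrow> ('a list \<Rightarrow> 'k) \<Rightarrow> ('a list \<Rightarrow> 'k) \<Rightarrow> ('a list \<Rightarrow> 'k)" where
  "OA_comp sm cop m n i f g = (\<lambda>xs.
     if length xs = m + n - 1 \<and> 1 \<le> i \<and> i \<le> m then
       swsum cop (take n (drop (i - 1) xs))
         (\<lambda>ch. f (take (i - 1) xs @ sm (g (map snd ch)) (prod_list (map fst ch)) # drop (i - 1 + n) xs))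
     else 0)"

definition OA_mu :: "('a::ring_1 \<Rightarrow> 'k::comm_ring_1) \<Rightarrow> 'a list \<Rightarrow> 'k" where
  "OA_mu eps = (\<lambda>xs. if length xs = 2 then eps (xs ! 0 * xs ! 1) else 0)"

definition OA_e :: "'a list \<Rightarrow> 'k::comm_ring_1" where
  "OA_e = (\<lambda>xs. if xs = [] then 1 else 0)"

text \<open>The endomorphism operad End(A), End(A)(n) = Hom(A^{(x)n}, A).\<close>
definition End_comp :: "nat \<Rightarrow> nat \<Rightarrow> nat \<Rightarrow> ('a list \<Rightarrow> 'a::ring_1) \<Rightarrow> ('a list \<Rightarrow> 'a) \<Rightarrow> ('a list \<Rightarrow> 'a)" where
  "End_comp m n i f g = (\<lambda>xs.
     if length xs = m + n - 1 \<and> 1 \<le> i \<and> i \<le> m then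
       f (take (i - 1) xs @ g (take n (drop (i - 1) xs)) # drop (i - 1 + n) xs)
     else 0)"

definition End_mu :: "'a list \<Rightarrow> 'a::ring_1" where
  "End_mu = (\<lambda>xs. if length xs = 2 then xs ! 0 * xs ! 1 else 0)"

definition End_e :: "'a list \<Rightarrow> 'a::ring_1" where
  "End_e = (\<lambda>xs. if xs = [] then 1 else 0)"

definition lift :: "('k::comm_ring_1 \<Rightarrow> 'a::ring_1 \<Rightarrow> 'a) \<Rightarrow> ('a \<Rightarrow> ('a \<times> 'a) list)
    \<Rightarrow> nat \<Rightarrow> ('a list \<Rightarrow> 'k) \<Rightarrow> ('a list \<Rightarrow> 'a)" where
  "lift sm cop n f = (\<lambda>xs.
     if length xs = n then swsum cop xs (\<lambda>ch. sm (f (map snd ch)) (prod_list (map fst ch)))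
     else 0)"

definition ExtCocycle where
  "ExtCocycle sm cop eps = cocyc (cochain sm (*)) (OA_comp sm cop) (OA_mu eps)"
definition ExtEq where
  "ExtEq sm cop eps = cohom (cochain sm (*)) (OA_comp sm cop) (OA_mu eps)"
definition HHCocycle where
  "HHCocycle sm = cocyc (cochain sm sm) End_comp End_mu"
definition HHEq where
  "HHEq sm = cohom (cochain sm sm) End_comp End_mu"

end

theory Submission
  imports Defs
begin

text \<open>
  Coassociativity and multiplicativity of
  \<open>\<Delta>\<close> show that the lift commutes with every partial composition, and the counit axiom shows
  that it sends \<open>\<epsilon> \<circ> \<mu>\<close> to \<open>\<mu>\<close>.  So the lift is a morphism of operads with multiplication and
  commutes on the nose with the differential, the cup product and the bracket.  Post-composition
  with \<open>\<epsilon>\<close> is a left inverse of the lift which also commutes with the differential, so the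
  induced map on cohomology is injective.
\<close>

lemma (in module) scale_sum_list: "scale r (sum_list (map f l)) = sum_list (map (\<lambda>x. scale r (f x)) l)"
  by (induction l) (simp_all add: scale_right_distrib)

lemma (in module) scale_sum_list_left: "scale (sum_list (map f l)) v = sum_list (map (\<lambda>x. scale (f x) v) l)"
  by (induction l) (simp_all add: scale_left_distrib)

lemma module_ring_mult: "module ((*) :: 'k::comm_ring_1 \<Rightarrow> 'k \<Rightarrow> 'k)"
  by standard (simp_all add: algebra_simps)

lemma sum_list_map_swap:
  fixes F :: "_ \<Rightarrow> _ \<Rightarrow> 'b::comm_monoid_add"
  shows "sum_list (map (\<lambda>x. sum_list (map (\<lambda>y. F x y) ys)) xs)
       = sum_list (map (\<lambda>y. sum_list (map (\<lambda>x. F x y) xs)) ys)"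
  by (induction xs) (simp_all add: sum_list_addf)

section \<open>Multilinear functions and formal tensors\<close>

definition multilinear ::
  "('k::comm_ring_1 \<Rightarrow> 'a::ab_group_add \<Rightarrow> 'a) \<Rightarrow> ('k \<Rightarrow> 'v::ab_group_add \<Rightarrow> 'v) \<Rightarrow> ('a list \<Rightarrow> 'v) \<Rightarrow> bool" where
  "multilinear sm sc \<phi> \<longleftrightarrow>
     (\<forall>us vs a b. \<phi> (us @ (a + b) # vs) = \<phi> (us @ a # vs) + \<phi> (us @ b # vs)) \<and>
     (\<forall>us vs r a. \<phi> (us @ sm r a # vs) = sc r (\<phi> (us @ a # vs)))"

lemma multilinear_add: "multilinear sm sc \<phi> \<Longrightarrow> \<phi> (us @ (a + b) # vs) = \<phi> (us @ a # vs) + \<phi> (us @ b # vs)"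
  by (simp add: multilinear_def)

lemma multilinear_scale: "multilinear sm sc \<phi> \<Longrightarrow> \<phi> (us @ sm r a # vs) = sc r (\<phi> (us @ a # vs))"
  by (simp add: multilinear_def)

lemma multilinear_zero: "multilinear sm sc \<phi> \<Longrightarrow> \<phi> (us @ 0 # vs) = 0"
  using multilinear_add[of sm sc \<phi> us 0 0 vs] by simp

lemma multilinear_sum_list:
  "multilinear sm sc \<phi> \<Longrightarrow> \<phi> (us @ sum_list (map h l) # vs) = sum_list (map (\<lambda>z. \<phi> (us @ h z # vs)) l)"
  by (induction l) (simp_all add: multilinear_zero multilinear_add)

lemma multilinear_cochain:
  assumes "module sc" "cochain sm sc n f"
  shows "multilinear sm sc f"
proof -
  interpret V: module sc by fact
  show ?thesis
    unfolding multilinear_def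
  proof (intro conjI allI)
    fix us vs a b
    show "f (us @ (a + b) # vs) = f (us @ a # vs) + f (us @ b # vs)"
      using assms(2) by (cases "length us + length vs + 1 = n") (simp_all add: cochain_def)
  next
    fix us vs r a
    show "f (us @ sm r a # vs) = sc r (f (us @ a # vs))"
      using assms(2) by (cases "length us + length vs + 1 = n") (simp_all add: cochain_def)
  qed
qed

definition tensor_eval ::
  "('k::comm_ring_1 \<Rightarrow> 'v::ab_group_add \<Rightarrow> 'v) \<Rightarrow> ('a list \<Rightarrow> 'v) \<Rightarrow> ('a list \<Rightarrow>\<^sub>0 'k) \<Rightarrow> 'v" where
  "tensor_eval sc \<phi> p = (\<Sum>xs\<in>Poly_Mapping.keys p. sc (Poly_Mapping.lookup p xs) (\<phi> xs))"

context module
begin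

lemma tensor_eval_superset:
  assumes "finite S" "Poly_Mapping.keys p \<subseteq> S"
  shows "tensor_eval scale \<phi> p = (\<Sum>xs\<in>S. scale (Poly_Mapping.lookup p xs) (\<phi> xs))"
  unfolding tensor_eval_def
  by (rule sum.mono_neutral_left) (use assms in \<open>auto simp: in_keys_iff\<close>)

lemma tensor_eval_add: "tensor_eval scale \<phi> (p + q) = tensor_eval scale \<phi> p + tensor_eval scale \<phi> q"
proof -
  let ?S = "Poly_Mapping.keys p \<union> Poly_Mapping.keys q"
  have "tensor_eval scale \<phi> (p + q) = (\<Sum>xs\<in>?S. scale (Poly_Mapping.lookup (p + q) xs) (\<phi> xs))"
    by (rule tensor_eval_superset) (auto dest: keys_add[THEN subsetD])
  also have "\<dots> = (\<Sum>xs\<in>?S. scale (Poly_Mapping.lookup p xs) (\<phi> xs))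
                 + (\<Sum>xs\<in>?S. scale (Poly_Mapping.lookup q xs) (\<phi> xs))"
    by (simp add: lookup_add scale_left_distrib sum.distrib)
  also have "\<dots> = tensor_eval scale \<phi> p + tensor_eval scale \<phi> q"
    by (subst (1 2) tensor_eval_superset[of ?S]) auto
  finally show ?thesis .
qed

lemma tensor_eval_diff: "tensor_eval scale \<phi> (p - q) = tensor_eval scale \<phi> p - tensor_eval scale \<phi> q"
  using tensor_eval_add[of \<phi> "p - q" q] by (simp add: algebra_simps)

lemma tensor_eval_single: "tensor_eval scale \<phi> (Poly_Mapping.single xs c) = scale c (\<phi> xs)"
  by (simp add: tensor_eval_def)

lemma tensor_eval_sum_list_pairs:
  "tensor_eval scale \<phi> (sum_list (map (\<lambda>(x, y). F x y) l))
     = sum_list (map (\<lambda>(x, y). tensor_eval scale \<phi> (F x y)) l)"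
  by (induction l) (auto simp: tensor_eval_def[of _ _ 0] tensor_eval_add)

lemma tensor_eval_tnull:
  assumes "multilinear sm scale \<phi>" "x \<in> tnull sm"
  shows "tensor_eval scale \<phi> x = 0"
  using assms(2)
proof (induction rule: tnull.induct)
  case tnull_zero
  then show ?case by (simp add: tensor_eval_def)
next
  case tnull_add_rel
  then show ?case
    using assms(1) by (simp add: tensor_eval_diff tensor_eval_single multilinear_def scale_right_distrib)
next
  case tnull_smul_rel
  then show ?case
    using assms(1) by (simp add: tensor_eval_diff tensor_eval_single multilinear_def mult.commute)
next
  case tnull_sum
  then show ?case by (simp add: tensor_eval_add)
qed

lemma tensor_eval_teq:
  assumes "multilinear sm scale \<phi>" "teq sm p q"
  shows "tensor_eval scale \<phi> p = tensor_eval scale \<phi> q"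
  using tensor_eval_tnull[OF assms(1)] assms(2) tensor_eval_diff[of \<phi> p q]
  by (simp add: teq_def)

end

definition bilinear ::
  "('k::comm_ring_1 \<Rightarrow> 'a::ab_group_add \<Rightarrow> 'a) \<Rightarrow> ('k \<Rightarrow> 'v::ab_group_add \<Rightarrow> 'v) \<Rightarrow> ('a \<Rightarrow> 'a \<Rightarrow> 'v) \<Rightarrow> bool" where
  "bilinear sm sc \<psi> \<longleftrightarrow>
     (\<forall>x x' y. \<psi> (x + x') y = \<psi> x y + \<psi> x' y) \<and> (\<forall>x y y'. \<psi> x (y + y') = \<psi> x y + \<psi> x y') \<and>
     (\<forall>r x y. \<psi> (sm r x) y = sc r (\<psi> x y)) \<and> (\<forall>r x y. \<psi> x (sm r y) = sc r (\<psi> x y))"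

definition trilinear ::
  "('k::comm_ring_1 \<Rightarrow> 'a::ab_group_add \<Rightarrow> 'a) \<Rightarrow> ('k \<Rightarrow> 'v::ab_group_add \<Rightarrow> 'v) \<Rightarrow> ('a \<Rightarrow> 'a \<Rightarrow> 'a \<Rightarrow> 'v) \<Rightarrow> bool" where
  "trilinear sm sc \<psi> \<longleftrightarrow> (\<forall>y z. bilinear sm sc (\<lambda>x x'. \<psi> x x' z) \<and> bilinear sm sc (\<lambda>x' z. \<psi> y x' z))"

lemma bilinearD:
  assumes "bilinear sm sc \<psi>"
  shows "\<psi> (x + x') y = \<psi> x y + \<psi> x' y" "\<psi> x (y + y') = \<psi> x y + \<psi> x y'"
    "\<psi> (sm r x) y = sc r (\<psi> x y)" "\<psi> x (sm r y) = sc r (\<psi> x y)"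
  using assms by (simp_all add: bilinear_def)

lemma bilinear_sum_list:
  assumes "module sc" "\<And>z. z \<in> set l \<Longrightarrow> bilinear sm sc (G z)"
  shows "bilinear sm sc (\<lambda>x y. sum_list (map (\<lambda>z. G z x y) l))"
proof -
  interpret V: module sc by fact
  show ?thesis
    using assms(2) by (induction l) (auto simp: bilinear_def V.scale_right_distrib)
qed

lemma trilinear_sum_list:
  assumes "module sc" "\<And>z. z \<in> set l \<Longrightarrow> trilinear sm sc (G z)"
  shows "trilinear sm sc (\<lambda>x y w. sum_list (map (\<lambda>z. G z x y w) l))"
  using assms unfolding trilinear_def by (auto intro!: bilinear_sum_list)

definition binary_fun :: "('a \<Rightarrow> 'a \<Rightarrow> 'v::zero) \<Rightarrow> 'a list \<Rightarrow> 'v" where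
  "binary_fun \<psi> xs = (if length xs = 2 then \<psi> (xs ! 0) (xs ! 1) else 0)"

definition ternary_fun :: "('a \<Rightarrow> 'a \<Rightarrow> 'a \<Rightarrow> 'v::zero) \<Rightarrow> 'a list \<Rightarrow> 'v" where
  "ternary_fun \<psi> xs = (if length xs = 3 then \<psi> (xs ! 0) (xs ! 1) (xs ! 2) else 0)"

lemma multilinear_binary_fun:
  assumes "module sc" "bilinear sm sc \<psi>"
  shows "multilinear sm sc (binary_fun \<psi>)"
proof -
  interpret V: module sc by fact
  show ?thesis
    unfolding multilinear_def
  proof (intro conjI allI)
    fix us vs a b
    show "binary_fun \<psi> (us @ (a + b) # vs) = binary_fun \<psi> (us @ a # vs) + binary_fun \<psi> (us @ b # vs)"
      using assms(2) by (cases us; cases vs) (auto simp: binary_fun_def bilinear_def)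
  next
    fix us vs r a
    show "binary_fun \<psi> (us @ sm r a # vs) = sc r (binary_fun \<psi> (us @ a # vs))"
      using assms(2) by (cases us; cases vs) (auto simp: binary_fun_def bilinear_def)
  qed
qed

lemma multilinear_ternary_fun:
  assumes "module sc" "trilinear sm sc \<psi>"
  shows "multilinear sm sc (ternary_fun \<psi>)"
proof -
  interpret V: module sc by fact
  show ?thesis
    unfolding multilinear_def
  proof (intro conjI allI)
    fix us vs a b
    show "ternary_fun \<psi> (us @ (a + b) # vs) = ternary_fun \<psi> (us @ a # vs) + ternary_fun \<psi> (us @ b # vs)"
      using assms(2)
      by (cases us; cases vs) (auto simp: ternary_fun_def trilinear_def bilinear_def length_Suc_conv)
  next
    fix us vs r a
    show "ternary_fun \<psi> (us @ sm r a # vs) = sc r (ternary_fun \<psi> (us @ a # vs))"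
      using assms(2)
      by (cases us; cases vs) (auto simp: ternary_fun_def trilinear_def bilinear_def length_Suc_conv)
  qed
qed

lemma sum_list_concat: "sum_list (concat xss) = sum_list (map sum_list xss)"
  by (induction xss) simp_all

lemma swsum_Nil [simp]: "swsum cop [] F = F []"
  by (simp add: swsum_def)

lemma swsum_Cons:
  "swsum cop (a # as) F = sum_list (map (\<lambda>(x, y). swsum cop as (\<lambda>c. F ((x, y) # c))) (cop a))"
  by (simp add: swsum_def sum_list_concat map_concat comp_def split_def)

lemma swsum_cong:
  "(\<And>c. c \<in> set (product_lists (map cop as)) \<Longrightarrow> F c = G c) \<Longrightarrow> swsum cop as F = swsum cop as G"
  unfolding swsum_def by (metis map_cong)

lemma length_sweedler_choice: "c \<in> set (product_lists (map cop as)) \<Longrightarrow> length c = length as"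
  using in_set_product_lists_length by fastforce

lemma swsum_append: "swsum cop (as @ bs) F = swsum cop as (\<lambda>c. swsum cop bs (\<lambda>c'. F (c @ c')))"
  by (induction as arbitrary: F) (simp_all add: swsum_Cons)

lemma swsum_add:
  fixes F :: "_ \<Rightarrow> 'b::comm_monoid_add"
  shows "swsum cop as (\<lambda>c. F c + G c) = swsum cop as F + swsum cop as G"
  by (simp add: swsum_def sum_list_addf)

lemma swsum_zero: "swsum cop as (\<lambda>c. 0) = 0"
  by (simp add: swsum_def)

lemma swsum_swap:
  fixes F :: "_ \<Rightarrow> _ \<Rightarrow> 'b::comm_monoid_add"
  shows "swsum cop as (\<lambda>c. swsum cop bs (\<lambda>c'. F c c')) = swsum cop bs (\<lambda>c'. swsum cop as (\<lambda>c. F c c'))"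
  unfolding swsum_def by (rule sum_list_map_swap)

lemma swsum_sum_list_pairs:
  fixes F :: "_ \<Rightarrow> _ \<Rightarrow> _ \<Rightarrow> 'b::comm_monoid_add"
  shows "swsum cop as (\<lambda>c. sum_list (map (\<lambda>(u, v). F c u v) l))
       = sum_list (map (\<lambda>(u, v). swsum cop as (\<lambda>c. F c u v)) l)"
  by (induction l) (simp_all add: swsum_add swsum_zero split_def)

lemma (in module) scale_swsum: "scale r (swsum cop as F) = swsum cop as (\<lambda>c. scale r (F c))"
  by (simp add: swsum_def scale_sum_list)

lemma (in module) scale_swsum_left: "scale (swsum cop as F) v = swsum cop as (\<lambda>c. scale (F c) v)"
  by (simp add: swsum_def scale_sum_list_left)

lemma bilinear_swsum:
  "module sc \<Longrightarrow> (\<And>c. bilinear sm sc (G c)) \<Longrightarrow> bilinear sm sc (\<lambda>x y. swsum cop as (\<lambda>c. G c x y))"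
  unfolding swsum_def by (rule bilinear_sum_list) auto

lemma trilinear_swsum:
  "module sc \<Longrightarrow> (\<And>c. trilinear sm sc (G c)) \<Longrightarrow> trilinear sm sc (\<lambda>x y w. swsum cop as (\<lambda>c. G c x y w))"
  unfolding swsum_def by (rule trilinear_sum_list) auto

definition pairwise_bilinear ::
  "('k::comm_ring_1 \<Rightarrow> 'a::ab_group_add \<Rightarrow> 'a) \<Rightarrow> ('k \<Rightarrow> 'v::ab_group_add \<Rightarrow> 'v) \<Rightarrow> (('a \<times> 'a) list \<Rightarrow> 'v) \<Rightarrow> bool" where
  "pairwise_bilinear sm sc F \<longleftrightarrow> (\<forall>c1 c2. bilinear sm sc (\<lambda>x y. F (c1 @ (x, y) # c2)))"

definition triplewise_trilinear ::
  "('k::comm_ring_1 \<Rightarrow> 'a::ab_group_add \<Rightarrow> 'a) \<Rightarrow> ('k \<Rightarrow> 'v::ab_group_add \<Rightarrow> 'v) \<Rightarrow> (('a \<times> 'a \<times> 'a) list \<Rightarrow> 'v) \<Rightarrow> bool" where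
  "triplewise_trilinear sm sc F \<longleftrightarrow> (\<forall>t1 t2. trilinear sm sc (\<lambda>x y z. F (t1 @ (x, y, z) # t2)))"

lemma map_zip_triples_left:
  assumes "length d = length ys"
  shows "map fst (map2 (\<lambda>p y. (fst p, snd p, y)) d ys) = map fst d"
    "map (\<lambda>t. fst (snd t)) (map2 (\<lambda>p y. (fst p, snd p, y)) d ys) = map snd d"
    "map (\<lambda>t. snd (snd t)) (map2 (\<lambda>p y. (fst p, snd p, y)) d ys) = ys"
  using assms by (induction d ys rule: list_induct2) simp_all

lemma map_zip_triples_right:
  assumes "length xs = length d"
  shows "map fst (map2 (\<lambda>x p. (x, fst p, snd p)) xs d) = xs"
    "map (\<lambda>t. fst (snd t)) (map2 (\<lambda>x p. (x, fst p, snd p)) xs d) = map fst d"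
    "map (\<lambda>t. snd (snd t)) (map2 (\<lambda>x p. (x, fst p, snd p)) xs d) = map snd d"
  using assms by (induction xs d rule: list_induct2) simp_all

section \<open>Bialgebra identities in Sweedler notation\<close>

locale bialg =
  fixes sm :: "'k::comm_ring_1 \<Rightarrow> 'a::ring_1 \<Rightarrow> 'a"
    and cop :: "'a \<Rightarrow> ('a \<times> 'a) list"
    and eps :: "'a \<Rightarrow> 'k"
  assumes bialgebra: "bialgebra sm cop eps"
begin

sublocale A: module sm
  using bialgebra by (simp add: bialgebra_def)

lemma scale_mult_left: "sm r (a * b) = sm r a * b"
  using bialgebra unfolding bialgebra_def by blast

lemma scale_mult_right: "sm r (a * b) = a * sm r b"
  using bialgebra unfolding bialgebra_def by blast

lemma eps_add: "eps (a + b) = eps a + eps b"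
  using bialgebra by (simp add: bialgebra_def)

lemma eps_scale: "eps (sm r a) = r * eps a"
  using bialgebra by (simp add: bialgebra_def)

lemma eps_mult: "eps (a * b) = eps a * eps b"
  using bialgebra by (simp add: bialgebra_def)

lemma eps_one: "eps 1 = 1"
  using bialgebra by (simp add: bialgebra_def)

lemma counit_left: "sum_list (map (\<lambda>(x, y). sm (eps x) y) (cop a)) = a"
  using bialgebra by (simp add: bialgebra_def)

lemma counit_right: "sum_list (map (\<lambda>(x, y). sm (eps y) x) (cop a)) = a"
  using bialgebra by (simp add: bialgebra_def)

lemma eps_zero: "eps 0 = 0"
  using eps_add[of 0 0] by simp

lemma eps_diff: "eps (a - b) = eps a - eps b"
  using eps_add[of "a - b" b] by (simp add: algebra_simps)

lemma eps_sum_list: "eps (sum_list (map f l)) = sum_list (map (\<lambda>x. eps (f x)) l)"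
  by (induction l) (simp_all add: eps_zero eps_add)

lemma eps_prod_list: "eps (prod_list (map f l)) = prod_list (map (\<lambda>x. eps (f x)) l)"
  by (induction l) (simp_all add: eps_one eps_mult)

definition sweedler :: "'a \<Rightarrow> ('a \<Rightarrow> 'a \<Rightarrow> 'v::ab_group_add) \<Rightarrow> 'v" where
  "sweedler a \<psi> = sum_list (map (\<lambda>(x, y). \<psi> x y) (cop a))"

text \<open>The bialgebra axioms are equalities of formal tensors; evaluating a bilinear
  (resp. trilinear) function on both sides turns them into the identities below.\<close>

lemma tensor_eval_dsum:
  assumes "module sc"
  shows "tensor_eval sc (binary_fun \<psi>) (dsum cop a) = sweedler a \<psi>"
proof -
  interpret V: module sc by fact
  show ?thesis
    unfolding dsum_def sweedler_def
    by (simp add: V.tensor_eval_sum_list_pairs V.tensor_eval_single pt_def binary_fun_def)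
qed

lemma sweedler_add:
  assumes "module sc" "bilinear sm sc \<psi>"
  shows "sweedler (a + b) \<psi> = sweedler a \<psi> + sweedler b \<psi>"
proof -
  have "teq sm (dsum cop (a + b)) (dsum cop a + dsum cop b)"
    using bialgebra by (simp add: bialgebra_def)
  from module.tensor_eval_teq[OF assms(1) multilinear_binary_fun[OF assms] this] show ?thesis
    by (simp add: tensor_eval_dsum[OF assms(1)] module.tensor_eval_add[OF assms(1)])
qed

lemma sweedler_scale:
  assumes "module sc" "bilinear sm sc \<psi>"
  shows "sweedler (sm r a) \<psi> = sc r (sweedler a \<psi>)"
proof -
  interpret V: module sc by fact
  have "teq sm (dsum cop (sm r a)) (sum_list (map (\<lambda>(x, y). Poly_Mapping.single [x, y] r) (cop a)))"
    using bialgebra by (simp add: bialgebra_def)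
  from V.tensor_eval_teq[OF multilinear_binary_fun[OF assms] this] show ?thesis
    by (simp add: tensor_eval_dsum[OF assms(1)] V.tensor_eval_sum_list_pairs V.tensor_eval_single
        binary_fun_def sweedler_def V.scale_sum_list prod.case_distrib)
qed

lemma sweedler_coassoc:
  assumes "module sc" "trilinear sm sc \<psi>"
  shows "sum_list (map (\<lambda>(x, y). sum_list (map (\<lambda>(u, v). \<psi> u v y) (cop x))) (cop a))
       = sum_list (map (\<lambda>(x, y). sum_list (map (\<lambda>(u, v). \<psi> x u v) (cop y))) (cop a))"
proof -
  interpret V: module sc by fact
  have "teq sm
        (sum_list (map (\<lambda>(x, y). sum_list (map (\<lambda>(u, v). pt [u, v, y]) (cop x))) (cop a)))
        (sum_list (map (\<lambda>(x, y). sum_list (map (\<lambda>(u, v). pt [x, u, v]) (cop y))) (cop a)))"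
    using bialgebra by (simp add: bialgebra_def)
  from V.tensor_eval_teq[OF multilinear_ternary_fun[OF assms] this] show ?thesis
    by (simp add: V.tensor_eval_sum_list_pairs V.tensor_eval_single pt_def ternary_fun_def)
qed

lemma sweedler_mult:
  assumes "module sc" "bilinear sm sc \<psi>"
  shows "sweedler (a * b) \<psi>
       = sum_list (map (\<lambda>(x, y). sum_list (map (\<lambda>(u, v). \<psi> (x * u) (y * v)) (cop b))) (cop a))"
proof -
  interpret V: module sc by fact
  have "teq sm (dsum cop (a * b))
        (sum_list (map (\<lambda>(x, y). sum_list (map (\<lambda>(u, v). pt [x * u, y * v]) (cop b))) (cop a)))"
    using bialgebra by (simp add: bialgebra_def)
  from V.tensor_eval_teq[OF multilinear_binary_fun[OF assms] this] show ?thesis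
    by (simp add: tensor_eval_dsum[OF assms(1)] V.tensor_eval_sum_list_pairs V.tensor_eval_single
        pt_def binary_fun_def)
qed

lemma sweedler_one:
  assumes "module sc" "bilinear sm sc \<psi>"
  shows "sweedler 1 \<psi> = \<psi> 1 1"
proof -
  interpret V: module sc by fact
  have "teq sm (dsum cop 1) (pt [1, 1])"
    using bialgebra by (simp add: bialgebra_def)
  from V.tensor_eval_teq[OF multilinear_binary_fun[OF assms] this] show ?thesis
    by (simp add: tensor_eval_dsum[OF assms(1)] V.tensor_eval_single pt_def binary_fun_def)
qed

lemma sweedler_prod_list:
  assumes "module sc" "bilinear sm sc \<Phi>"
  shows "sweedler (prod_list as) \<Phi> = swsum cop as (\<lambda>c. \<Phi> (prod_list (map fst c)) (prod_list (map snd c)))"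
  using assms(2)
proof (induction as arbitrary: \<Phi>)
  case Nil
  then show ?case by (simp add: sweedler_one[OF assms(1)])
next
  case (Cons a as)
  have "bilinear sm sc (\<lambda>u v. \<Phi> (x * u) (y * v))" for x y
    using Cons.prems by (simp add: bilinear_def distrib_left scale_mult_right[symmetric])
  then show ?case
    by (simp add: sweedler_mult[OF assms(1) Cons.prems] Cons.IH swsum_Cons flip: sweedler_def)
qed

lemma sweedler_swsum:
  assumes "module sc" "bilinear sm sc \<Phi>"
  shows "sweedler (swsum cop bs F) \<Phi> = swsum cop bs (\<lambda>c. sweedler (F c) \<Phi>)"
proof -
  have "sweedler (sum_list (map F l)) \<Phi> = sum_list (map (\<lambda>z. sweedler (F z) \<Phi>) l)" for l
  proof (induction l)
    case Nil
    show ?case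
      using sweedler_scale[OF assms, of 0 0] assms(1) by (simp add: module.scale_zero_left)
  next
    case (Cons a l)
    then show ?case by (simp add: sweedler_add[OF assms])
  qed
  then show ?thesis by (simp add: swsum_def)
qed

lemma swsum_add_at:
  assumes "module sc" "pairwise_bilinear sm sc F"
  shows "swsum cop (us @ (a + b) # vs) F = swsum cop (us @ a # vs) F + swsum cop (us @ b # vs) F"
proof -
  have "bilinear sm sc (\<lambda>x y. swsum cop vs (\<lambda>c. F (c1 @ (x, y) # c)))" for c1
    by (rule bilinear_swsum[OF assms(1)]) (use assms(2) in \<open>auto simp: pairwise_bilinear_def\<close>)
  then show ?thesis
    by (simp add: swsum_append swsum_Cons sweedler_add[OF assms(1)] swsum_add flip: sweedler_def)
qed

lemma swsum_scale_at:
  assumes "module sc" "pairwise_bilinear sm sc F"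
  shows "swsum cop (us @ sm r a # vs) F = sc r (swsum cop (us @ a # vs) F)"
proof -
  have "bilinear sm sc (\<lambda>x y. swsum cop vs (\<lambda>c. F (c1 @ (x, y) # c)))" for c1
    by (rule bilinear_swsum[OF assms(1)]) (use assms(2) in \<open>auto simp: pairwise_bilinear_def\<close>)
  then show ?thesis
    by (simp add: swsum_append swsum_Cons sweedler_scale[OF assms(1)] module.scale_swsum[OF assms(1)]
        flip: sweedler_def)
qed

lemma swsum_counit_contract:
  assumes "multilinear sm (*) \<Phi>"
  shows "swsum cop vs (\<lambda>c. \<Phi> (us @ map snd c) * prod_list (map (\<lambda>p. eps (fst p)) c)) = \<Phi> (us @ vs)"
proof (induction vs arbitrary: us)
  case Nil
  then show ?case by simp
next
  case (Cons v vs)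
  have inner: "swsum cop vs (\<lambda>c. \<Phi> (us @ y # map snd c) * (eps x * prod_list (map (\<lambda>p. eps (fst p)) c)))
      = eps x * \<Phi> (us @ y # vs)" for x y
    using Cons.IH[of "us @ [y]"]
    by (simp add: module.scale_swsum[OF module_ring_mult, symmetric] mult.left_commute)
  have "swsum cop (v # vs) (\<lambda>c. \<Phi> (us @ map snd c) * prod_list (map (\<lambda>p. eps (fst p)) c))
      = sum_list (map (\<lambda>(x, y). \<Phi> (us @ sm (eps x) y # vs)) (cop v))"
    by (simp add: swsum_Cons inner multilinear_scale[OF assms])
  also have "\<dots> = \<Phi> (us @ v # vs)"
    by (simp add: multilinear_sum_list[OF assms, symmetric] split_def counit_left[unfolded split_def])
  finally show ?case .
qed

end

context bialg
begin

definition lift_summand :: "('a list \<Rightarrow> 'k) \<Rightarrow> ('a \<times> 'a) list \<Rightarrow> 'a" where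
  "lift_summand f c = sm (f (map snd c)) (prod_list (map fst c))"

lemma lift_eq_swsum: "length xs = n \<Longrightarrow> lift sm cop n f xs = swsum cop xs (lift_summand f)"
  by (simp add: lift_def lift_summand_def[abs_def])

lemma pairwise_bilinear_lift_summand:
  assumes "multilinear sm (*) f"
  shows "pairwise_bilinear sm sm (lift_summand f)"
  unfolding pairwise_bilinear_def bilinear_def lift_summand_def
  using multilinear_add[OF assms] multilinear_scale[OF assms]
  by (simp add: distrib_left distrib_right A.scale_right_distrib A.scale_left_distrib
      scale_mult_left[symmetric] scale_mult_right[symmetric] mult.commute)

lemma cochain_lift:
  assumes "cochain sm (*) n f"
  shows "cochain sm sm n (lift sm cop n f)"
proof -
  have "pairwise_bilinear sm sm (lift_summand f)"
    by (rule pairwise_bilinear_lift_summand[OF multilinear_cochain[OF module_ring_mult assms]])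
  then show ?thesis
    unfolding cochain_def
    by (simp add: lift_eq_swsum swsum_add_at[OF A.module_axioms] swsum_scale_at[OF A.module_axioms])
      (simp add: lift_def)
qed

lemma lift_add: "lift sm cop n (f + g) = lift sm cop n f + lift sm cop n g"
  by (rule ext) (simp add: lift_def swsum_def A.scale_left_distrib sum_list_addf)

lemma lift_zero: "lift sm cop n 0 = 0"
  by (rule ext) (simp add: lift_def swsum_def)

lemma lift_diff: "lift sm cop n (f - g) = lift sm cop n f - lift sm cop n g"
  using lift_add[of n "f - g" g] by (simp add: algebra_simps)

lemma lift_sgnc: "lift sm cop n (sgnc k f) = sgnc k (lift sm cop n f)"
  using lift_diff[of n 0 f] by (simp add: sgnc_def lift_zero)

lemma lift_sum: "lift sm cop n (\<Sum>i\<in>I. F i) = (\<Sum>i\<in>I. lift sm cop n (F i))"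
proof (induction I rule: infinite_finite_induct)
  case (infinite I)
  then show ?case by (simp only: sum.infinite[OF infinite] lift_zero)
next
  case empty
  then show ?case by (simp only: sum.empty lift_zero)
next
  case (insert i I)
  then show ?case by (simp only: sum.insert[OF insert(1,2)] lift_add insert(3))
qed

lemma lift_scale: "lift sm cop n (\<lambda>xs. r * f xs) = (\<lambda>xs. sm r (lift sm cop n f xs))"
  by (rule ext) (simp add: lift_def swsum_def A.scale_sum_list)

lemma eps_comp_lift:
  assumes "cochain sm (*) n f"
  shows "eps \<circ> lift sm cop n f = f"
proof
  fix xs
  show "(eps \<circ> lift sm cop n f) xs = f xs"
  proof (cases "length xs = n")
    case True
    have "eps (lift sm cop n f xs)
        = swsum cop xs (\<lambda>c. f ([] @ map snd c) * prod_list (map (\<lambda>p. eps (fst p)) c))"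
      using True by (simp add: lift_def swsum_def eps_sum_list eps_scale eps_prod_list)
    also have "\<dots> = f xs"
      using swsum_counit_contract[OF multilinear_cochain[OF module_ring_mult assms], of xs "[]"] by simp
    finally show ?thesis by simp
  next
    case False
    then show ?thesis using assms by (simp add: lift_def cochain_def eps_zero)
  qed
qed

lemma lift_OA_mu: "lift sm cop 2 (OA_mu eps) = End_mu"
proof
  fix xs :: "'a list"
  show "lift sm cop 2 (OA_mu eps) xs = End_mu xs"
  proof (cases "length xs = 2")
    case True
    then obtain a b where xs: "xs = [a, b]"
      by (auto simp: numeral_2_eq_2 length_Suc_conv)
    have "bilinear sm sm (\<lambda>p q. sm (eps q) p)"
      by (simp add: bilinear_def A.scale_right_distrib A.scale_left_distrib eps_add eps_scale mult.commute)
    then have "lift sm cop 2 (OA_mu eps) xs = sweedler (a * b) (\<lambda>p q. sm (eps q) p)"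
      by (simp add: xs lift_def swsum_Cons OA_mu_def split_def sweedler_mult[OF A.module_axioms])
    also have "\<dots> = a * b"
      by (simp add: sweedler_def counit_right)
    finally show ?thesis by (simp add: xs End_mu_def)
  next
    case False
    then show ?thesis by (simp add: lift_def End_mu_def)
  qed
qed

text \<open>Coassociativity for a whole list of Sweedler choices at once: splitting the first
  legs again, or splitting the second legs, gives the same iterated sum.\<close>

lemma swsum_coassoc:
  assumes "module sc" "triplewise_trilinear sm sc \<Theta>"
  shows "swsum cop bs (\<lambda>d. swsum cop (map fst d) (\<lambda>d'. \<Theta> (map2 (\<lambda>p y. (fst p, snd p, y)) d' (map snd d))))
       = swsum cop bs (\<lambda>d. swsum cop (map snd d) (\<lambda>d'. \<Theta> (map2 (\<lambda>x p. (x, fst p, snd p)) (map fst d) d')))"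
  using assms(2)
proof (induction bs arbitrary: \<Theta>)
  case Nil
  then show ?case by simp
next
  case (Cons b bs)
  have tail: "triplewise_trilinear sm sc (\<lambda>t. \<Theta> ((u, v, y) # t))" for u v y
    unfolding triplewise_trilinear_def
    using Cons.prems[unfolded triplewise_trilinear_def, rule_format, of "(u, v, y) # _"] by simp
  define W where "W u v y = swsum cop bs (\<lambda>d. swsum cop (map snd d)
      (\<lambda>d'. \<Theta> ((u, v, y) # map2 (\<lambda>x p. (x, fst p, snd p)) (map fst d) d')))" for u v y
  have "trilinear sm sc (\<lambda>u v y. \<Theta> ((u, v, y) # t))" for t
    using Cons.prems[unfolded triplewise_trilinear_def, rule_format, of "[]" t] by simp
  then have W: "trilinear sm sc W"
    unfolding W_def by (intro trilinear_swsum[OF assms(1)])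
  have "swsum cop (b # bs) (\<lambda>d. swsum cop (map fst d) (\<lambda>d'. \<Theta> (map2 (\<lambda>p y. (fst p, snd p, y)) d' (map snd d))))
     = sum_list (map (\<lambda>(x, y). sum_list (map (\<lambda>(u, v). swsum cop bs (\<lambda>d. swsum cop (map fst d)
          (\<lambda>d'. \<Theta> ((u, v, y) # map2 (\<lambda>p y. (fst p, snd p, y)) d' (map snd d))))) (cop x))) (cop b))"
    by (simp add: swsum_Cons) (simp only: swsum_sum_list_pairs)
  also have "\<dots> = sum_list (map (\<lambda>(x, y). sum_list (map (\<lambda>(u, v). W u v y) (cop x))) (cop b))"
    unfolding W_def using Cons.IH[OF tail] by simp
  also have "\<dots> = sum_list (map (\<lambda>(x, y). sum_list (map (\<lambda>(u, v). W x u v) (cop y))) (cop b))"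
    by (rule sweedler_coassoc[OF assms(1) W])
  also have "\<dots> = swsum cop (b # bs)
      (\<lambda>d. swsum cop (map snd d) (\<lambda>d'. \<Theta> (map2 (\<lambda>x p. (x, fst p, snd p)) (map fst d) d')))"
    unfolding W_def by (simp add: swsum_Cons) (simp only: swsum_sum_list_pairs)
  finally show ?case .
qed

text \<open>This is where coassociativity enters the compatibility of the lift with partial
  composition.\<close>

lemma sweedler_lift_value:
  assumes "module sc" "bilinear sm sc \<Phi>" "multilinear sm (*) g"
  shows "sweedler (swsum cop bs (\<lambda>d. sm (g (map snd d)) (prod_list (map fst d)))) \<Phi>
    = swsum cop bs (\<lambda>d. swsum cop (map snd d)
        (\<lambda>d'. \<Phi> (prod_list (map fst d)) (sm (g (map snd d')) (prod_list (map fst d')))))"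
proof -
  interpret V: module sc by fact
  define \<Theta> where "\<Theta> t = \<Phi> (prod_list (map fst t))
      (sm (g (map (\<lambda>t. snd (snd t)) t)) (prod_list (map (\<lambda>t. fst (snd t)) t)))" for t
  have \<Theta>: "triplewise_trilinear sm sc \<Theta>"
    unfolding triplewise_trilinear_def trilinear_def bilinear_def \<Theta>_def
    by (simp add: bilinearD[OF assms(2)] distrib_left distrib_right scale_mult_left[symmetric]
        scale_mult_right[symmetric] A.scale_right_distrib A.scale_left_distrib V.scale_right_distrib
        V.scale_left_distrib multilinear_add[OF assms(3)] multilinear_scale[OF assms(3)] mult.commute)
  have "sweedler (swsum cop bs (\<lambda>d. sm (g (map snd d)) (prod_list (map fst d)))) \<Phi>
      = swsum cop bs (\<lambda>d. sc (g (map snd d)) (swsum cop (map fst d)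
          (\<lambda>d'. \<Phi> (prod_list (map fst d')) (prod_list (map snd d')))))"
    by (simp add: sweedler_swsum[OF assms(1,2)] sweedler_scale[OF assms(1,2)] sweedler_prod_list[OF assms(1,2)])
  also have "\<dots> = swsum cop bs (\<lambda>d. swsum cop (map fst d) (\<lambda>d'. \<Theta> (map2 (\<lambda>p y. (fst p, snd p, y)) d' (map snd d))))"
  proof (rule swsum_cong)
    fix d :: "('a \<times> 'a) list"
    show "sc (g (map snd d)) (swsum cop (map fst d) (\<lambda>d'. \<Phi> (prod_list (map fst d')) (prod_list (map snd d'))))
      = swsum cop (map fst d) (\<lambda>d'. \<Theta> (map2 (\<lambda>p y. (fst p, snd p, y)) d' (map snd d)))"
      unfolding V.scale_swsum
    proof (rule swsum_cong)
      fix d' assume "d' \<in> set (product_lists (map cop (map fst d)))"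
      then have "length d' = length (map snd d)"
        by (auto dest: length_sweedler_choice)
      then show "sc (g (map snd d)) (\<Phi> (prod_list (map fst d')) (prod_list (map snd d')))
          = \<Theta> (map2 (\<lambda>p y. (fst p, snd p, y)) d' (map snd d))"
        unfolding \<Theta>_def by (simp only: map_zip_triples_left bilinearD(4)[OF assms(2)])
    qed
  qed
  also have "\<dots> = swsum cop bs (\<lambda>d. swsum cop (map snd d) (\<lambda>d'. \<Theta> (map2 (\<lambda>x p. (x, fst p, snd p)) (map fst d) d')))"
    by (rule swsum_coassoc[OF assms(1) \<Theta>])
  also have "\<dots> = swsum cop bs (\<lambda>d. swsum cop (map snd d)
      (\<lambda>d'. \<Phi> (prod_list (map fst d)) (sm (g (map snd d')) (prod_list (map fst d')))))"
  proof (intro swsum_cong)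
    fix d d' :: "('a \<times> 'a) list"
    assume "d' \<in> set (product_lists (map cop (map snd d)))"
    then have "length (map fst d) = length d'"
      by (auto dest: length_sweedler_choice)
    then show "\<Theta> (map2 (\<lambda>x p. (x, fst p, snd p)) (map fst d) d')
        = \<Phi> (prod_list (map fst d)) (sm (g (map snd d')) (prod_list (map fst d')))"
      unfolding \<Theta>_def by (simp only: map_zip_triples_right)
  qed
  finally show ?thesis .
qed

end

section \<open>The lift is a morphism of operads with multiplication\<close>

context bialg
begin

lemma OA_comp_split:
  assumes "length as = i - 1" "length bs = n" "length cs = m - i" "1 \<le> i" "i \<le> m"
  shows "OA_comp sm cop m n i f g (as @ bs @ cs)
       = swsum cop bs (\<lambda>d. f (as @ sm (g (map snd d)) (prod_list (map fst d)) # cs))"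
  using assms by (simp add: OA_comp_def add.commute)

lemma lift_OA_comp:
  assumes f: "cochain sm (*) m f" and g: "cochain sm (*) n g"
  shows "lift sm cop (m + n - 1) (OA_comp sm cop m n i f g) = End_comp m n i (lift sm cop m f) (lift sm cop n g)"
proof
  fix xs :: "'a list"
  show "lift sm cop (m + n - 1) (OA_comp sm cop m n i f g) xs = End_comp m n i (lift sm cop m f) (lift sm cop n g) xs"
  proof (cases "length xs = m + n - 1 \<and> 1 \<le> i \<and> i \<le> m")
    case False
    then show ?thesis
      by (auto simp: lift_def End_comp_def OA_comp_def swsum_def)
  next
    case True
    then have i: "1 \<le> i" "i \<le> m" by auto
    define as bs cs where "as = take (i - 1) xs" and "bs = take n (drop (i - 1) xs)"
      and "cs = drop (i - 1 + n) xs"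
    have lengths: "length as = i - 1" "length bs = n" "length cs = m - i"
      using True by (auto simp: as_def bs_def cs_def)
    have xs: "xs = as @ bs @ cs"
      unfolding as_def bs_def cs_def by (metis append_take_drop_id drop_drop add.commute)
    define c where "c = lift sm cop n g bs"
    have c: "c = swsum cop bs (\<lambda>d. sm (g (map snd d)) (prod_list (map fst d)))"
      using lengths by (simp add: c_def lift_def)
    define \<Psi> where "\<Psi> = (\<lambda>ca x y. swsum cop cs (\<lambda>cc. lift_summand f (ca @ (x, y) # cc)))"
    have \<Psi>: "bilinear sm sm (\<Psi> ca)" for ca
      unfolding \<Psi>_def
      using pairwise_bilinear_lift_summand[OF multilinear_cochain[OF module_ring_mult f]]
      by (intro bilinear_swsum[OF A.module_axioms]) (simp add: pairwise_bilinear_def)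
    have "End_comp m n i (lift sm cop m f) (lift sm cop n g) xs = lift sm cop m f (as @ c # cs)"
      using True by (simp add: End_comp_def as_def bs_def cs_def c_def)
    also have "\<dots> = swsum cop as (\<lambda>ca. sweedler c (\<Psi> ca))"
      using lengths i by (simp add: lift_eq_swsum swsum_append swsum_Cons \<Psi>_def flip: sweedler_def)
    also have "\<dots> = swsum cop as (\<lambda>ca. swsum cop bs (\<lambda>cb. swsum cop (map snd cb) (\<lambda>d.
          \<Psi> ca (prod_list (map fst cb)) (sm (g (map snd d)) (prod_list (map fst d))))))"
      unfolding c by (simp add: sweedler_lift_value[OF A.module_axioms \<Psi> multilinear_cochain[OF module_ring_mult g]])
    also have "\<dots> = swsum cop as (\<lambda>ca. swsum cop bs (\<lambda>cb. swsum cop cs (\<lambda>cc.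
          sm (swsum cop (map snd cb) (\<lambda>d. f (map snd ca @ sm (g (map snd d)) (prod_list (map fst d)) # map snd cc)))
             (prod_list (map fst ca) * (prod_list (map fst cb) * prod_list (map fst cc))))))"
      unfolding \<Psi>_def
      by (simp add: swsum_swap[of cop "map snd _" cs] lift_summand_def A.scale_swsum_left)
    also have "\<dots> = swsum cop as (\<lambda>ca. swsum cop bs (\<lambda>cb. swsum cop cs (\<lambda>cc.
          lift_summand (OA_comp sm cop m n i f g) (ca @ cb @ cc))))"
      using lengths i
      by (intro swsum_cong) (auto simp: lift_summand_def OA_comp_split dest!: length_sweedler_choice)
    also have "\<dots> = lift sm cop (m + n - 1) (OA_comp sm cop m n i f g) xs"
      using True by (simp add: xs lift_eq_swsum swsum_append)
    finally show ?thesis by simp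
  qed
qed

lemma cochain_OA_mu: "cochain sm (*) 2 (OA_mu eps)"
proof -
  have "bilinear sm (*) (\<lambda>a b. eps (a * b))"
    by (simp add: bilinear_def distrib_left distrib_right eps_add eps_scale
        scale_mult_left[symmetric] scale_mult_right[symmetric])
  then have "multilinear sm (*) (binary_fun (\<lambda>a b. eps (a * b)))"
    by (rule multilinear_binary_fun[OF module_ring_mult])
  moreover have "OA_mu eps = binary_fun (\<lambda>a b. eps (a * b))"
    by (simp add: fun_eq_iff OA_mu_def binary_fun_def)
  ultimately show ?thesis
    by (simp add: cochain_def multilinear_add multilinear_scale) (simp add: binary_fun_def)
qed

lemma lift_opd:
  assumes "cochain sm (*) n f"
  shows "lift sm cop (n + 1) (opd (OA_comp sm cop) (OA_mu eps) n f) = opd End_comp End_mu n (lift sm cop n f)"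
proof -
  have "lift sm cop (n + 1) (OA_comp sm cop 2 n j (OA_mu eps) f) = End_comp 2 n j End_mu (lift sm cop n f)"
    and "lift sm cop (n + 1) (OA_comp sm cop n 2 j f (OA_mu eps)) = End_comp n 2 j (lift sm cop n f) End_mu" for j
    using lift_OA_comp[OF cochain_OA_mu assms, of j] lift_OA_comp[OF assms cochain_OA_mu, of j]
    by (simp_all add: lift_OA_mu)
  then show ?thesis
    unfolding opd_def by (simp only: lift_add lift_sum lift_sgnc)
qed

end

section \<open>Composing with the counit\<close>

context bialg
begin

lemma eps_comp_add: "eps \<circ> (F + G) = (eps \<circ> F) + (eps \<circ> G)"
  by (simp add: fun_eq_iff eps_add)

lemma eps_comp_zero: "eps \<circ> 0 = 0"
  by (simp add: fun_eq_iff eps_zero)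

lemma eps_comp_diff: "eps \<circ> (F - G) = (eps \<circ> F) - (eps \<circ> G)"
  by (simp add: fun_eq_iff eps_diff)

lemma eps_comp_sgnc: "eps \<circ> sgnc k F = sgnc k (eps \<circ> F)"
  using eps_comp_diff[of 0 F] by (simp add: sgnc_def eps_comp_zero)

lemma eps_comp_sum: "eps \<circ> (\<Sum>i\<in>I. F i) = (\<Sum>i\<in>I. eps \<circ> F i)"
proof (induction I rule: infinite_finite_induct)
  case (infinite I)
  then show ?case by (simp only: sum.infinite[OF infinite] eps_comp_zero)
next
  case empty
  then show ?case by (simp only: sum.empty eps_comp_zero)
next
  case (insert i I)
  then show ?case by (simp only: sum.insert[OF insert(1,2)] eps_comp_add insert(3))
qed

lemma cochain_eps_comp: "cochain sm sm k H \<Longrightarrow> cochain sm (*) k (eps \<circ> H)"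
  unfolding cochain_def by (simp add: eps_add eps_scale eps_zero)

lemma OA_comp_mu_2:
  assumes "multilinear sm (*) \<phi>"
  shows "OA_comp sm cop 2 k 2 (OA_mu eps) \<phi> xs = (if length xs = k + 1 then eps (hd xs) * \<phi> (tl xs) else 0)"
proof (cases "length xs = k + 1")
  case True
  then obtain x rest where xs: "xs = x # rest" and rest: "length rest = k"
    by (cases xs) auto
  then have "OA_comp sm cop 2 k 2 (OA_mu eps) \<phi> xs
      = swsum cop rest (\<lambda>c. eps x * (\<phi> ([] @ map snd c) * prod_list (map (\<lambda>p. eps (fst p)) c)))"
    by (simp add: OA_comp_def OA_mu_def eps_mult eps_scale eps_prod_list)
  also have "\<dots> = eps x * \<phi> rest"
    using swsum_counit_contract[OF assms, of rest "[]"]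
    by (simp add: module.scale_swsum[OF module_ring_mult, symmetric])
  finally show ?thesis using xs rest by simp
next
  case False
  then show ?thesis by (simp add: OA_comp_def)
qed

lemma OA_comp_mu_1:
  assumes "multilinear sm (*) \<phi>"
  shows "OA_comp sm cop 2 k 1 (OA_mu eps) \<phi> xs
       = (if length xs = k + 1 then \<phi> (butlast xs) * eps (last xs) else 0)"
proof (cases "length xs = k + 1")
  case True
  then obtain x ini where xs: "xs = ini @ [x]" and ini: "length ini = k"
    by (metis add_diff_cancel_right' append_butlast_last_id length_butlast length_greater_0_conv
        zero_less_Suc Suc_eq_plus1)
  then have "OA_comp sm cop 2 k 1 (OA_mu eps) \<phi> xs
      = swsum cop ini (\<lambda>c. (\<phi> ([] @ map snd c) * prod_list (map (\<lambda>p. eps (fst p)) c)) * eps x)"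
    by (simp add: OA_comp_def OA_mu_def eps_mult eps_scale eps_prod_list)
  also have "\<dots> = \<phi> ini * eps x"
    using swsum_counit_contract[OF assms, of ini "[]"] by (simp add: swsum_def sum_list_mult_const)
  finally show ?thesis using xs ini by simp
next
  case False
  then show ?thesis by (simp add: OA_comp_def)
qed

lemma cochain_OA_comp_mu_1:
  assumes "cochain sm (*) m f"
  shows "cochain sm (*) (m + 1) (OA_comp sm cop 2 m 1 (OA_mu eps) f)"
  using assms multilinear_cochain[OF module_ring_mult assms]
  unfolding cochain_def OA_comp_mu_1[OF multilinear_cochain[OF module_ring_mult assms]]
  by (auto simp: butlast_append multilinear_add multilinear_scale eps_add eps_scale distrib_left distrib_right)

lemma eps_comp_mu_comp_2:
  assumes "cochain sm sm k H"
  shows "eps \<circ> End_comp 2 k 2 End_mu H = OA_comp sm cop 2 k 2 (OA_mu eps) (eps \<circ> H)"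
proof
  fix xs :: "'a list"
  show "(eps \<circ> End_comp 2 k 2 End_mu H) xs = OA_comp sm cop 2 k 2 (OA_mu eps) (eps \<circ> H) xs"
    unfolding OA_comp_mu_2[OF multilinear_cochain[OF module_ring_mult cochain_eps_comp[OF assms]]]
    by (auto simp: End_comp_def End_mu_def eps_mult eps_zero length_Suc_conv)
qed

lemma eps_comp_mu_comp_1:
  assumes "cochain sm sm k H"
  shows "eps \<circ> End_comp 2 k 1 End_mu H = OA_comp sm cop 2 k 1 (OA_mu eps) (eps \<circ> H)"
proof
  fix xs :: "'a list"
  show "(eps \<circ> End_comp 2 k 1 End_mu H) xs = OA_comp sm cop 2 k 1 (OA_mu eps) (eps \<circ> H) xs"
    unfolding OA_comp_mu_1[OF multilinear_cochain[OF module_ring_mult cochain_eps_comp[OF assms]]]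
    by (cases xs rule: rev_cases) (auto simp: End_comp_def End_mu_def eps_mult eps_zero nth_append)
qed

lemma OA_comp_comp_mu:
  assumes \<phi>: "multilinear sm (*) \<phi>"
    and lengths: "length as = i - 1" "length (as @ a # b # cs) = k + 1" "1 \<le> i"
  shows "OA_comp sm cop k 2 i \<phi> (OA_mu eps) (as @ a # b # cs) = \<phi> (as @ (a * b) # cs)"
proof -
  define \<psi> where "\<psi> p q = \<phi> (as @ sm (eps q) p # cs)" for p q
  have \<psi>: "bilinear sm (*) \<psi>"
    unfolding bilinear_def \<psi>_def
    by (simp add: multilinear_add[OF \<phi>] multilinear_scale[OF \<phi>]
        A.scale_right_distrib A.scale_left_distrib eps_add eps_scale mult.commute)
  have "OA_comp sm cop k 2 i \<phi> (OA_mu eps) (as @ a # b # cs)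
      = sum_list (map (\<lambda>(x, y). sum_list (map (\<lambda>(u, v). \<psi> (x * u) (y * v)) (cop b))) (cop a))"
    using lengths by (simp add: OA_comp_def swsum_Cons OA_mu_def \<psi>_def split_def)
  also have "\<dots> = sweedler (a * b) \<psi>"
    by (simp add: sweedler_mult[OF module_ring_mult \<psi>])
  also have "\<dots> = \<phi> (as @ sum_list (map (\<lambda>(x, y). sm (eps y) x) (cop (a * b))) # cs)"
    by (simp add: sweedler_def \<psi>_def multilinear_sum_list[OF \<phi>] split_def)
  also have "\<dots> = \<phi> (as @ (a * b) # cs)"
    by (simp add: counit_right)
  finally show ?thesis .
qed

lemma eps_comp_comp_mu:
  assumes "cochain sm sm k H"
  shows "eps \<circ> End_comp k 2 i H End_mu = OA_comp sm cop k 2 i (eps \<circ> H) (OA_mu eps)"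
proof
  fix xs :: "'a list"
  show "(eps \<circ> End_comp k 2 i H End_mu) xs = OA_comp sm cop k 2 i (eps \<circ> H) (OA_mu eps) xs"
  proof (cases "length xs = k + 1 \<and> 1 \<le> i \<and> i \<le> k")
    case True
    have "drop i xs = xs ! i # drop (Suc i) xs" "drop (i - 1) xs = xs ! (i - 1) # drop i xs"
      using True Cons_nth_drop_Suc[of i xs] Cons_nth_drop_Suc[of "i - 1" xs] by auto
    then have "xs = take (i - 1) xs @ xs ! (i - 1) # xs ! i # drop (Suc i) xs"
      by (metis append_take_drop_id)
    then obtain as a b cs where xs: "xs = as @ a # b # cs" and as: "length as = i - 1"
      using True by (metis length_take min.absorb2 diff_le_self le_trans le_add1)
    have "OA_comp sm cop k 2 i (eps \<circ> H) (OA_mu eps) xs = (eps \<circ> H) (as @ (a * b) # cs)"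
      unfolding xs using True xs as
      by (intro OA_comp_comp_mu[OF multilinear_cochain[OF module_ring_mult cochain_eps_comp[OF assms]]]) auto
    moreover have "i - 1 + length cs + 2 = k + 1"
      using True xs as by auto
    ultimately show ?thesis
      using True by (simp add: xs as End_comp_def End_mu_def)
  next
    case False
    then show ?thesis by (auto simp: End_comp_def OA_comp_def eps_zero)
  qed
qed

lemma eps_comp_opd:
  assumes "cochain sm sm k H"
  shows "eps \<circ> opd End_comp End_mu k H = opd (OA_comp sm cop) (OA_mu eps) k (eps \<circ> H)"
  unfolding opd_def
  by (simp only: eps_comp_add eps_comp_sum eps_comp_sgnc eps_comp_mu_comp_2[OF assms]
      eps_comp_comp_mu[OF assms] eps_comp_mu_comp_1[OF assms])

end

section \<open>The induced map on cohomology\<close>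

context bialg
begin

lemma opd_End_zero: "opd End_comp End_mu k (0 :: 'a list \<Rightarrow> 'a) = 0"
proof -
  have "End_comp 2 k 2 End_mu (0 :: 'a list \<Rightarrow> 'a) = 0" "End_comp 2 k 1 End_mu (0 :: 'a list \<Rightarrow> 'a) = 0"
    by (auto simp: fun_eq_iff End_comp_def End_mu_def nth_append min_def)
  moreover have "End_comp k 2 i (0 :: 'a list \<Rightarrow> 'a) End_mu = 0" "sgnc j (0 :: 'a list \<Rightarrow> 'a) = 0" for i j
    by (simp_all add: fun_eq_iff End_comp_def sgnc_def)
  ultimately show ?thesis
    unfolding opd_def by simp
qed

lemma HHEq_refl: "HHEq sm n F F"
proof -
  note opd_End_zero[of "n - 1"]
  moreover have "cochain sm sm (n - 1) (0 :: 'a list \<Rightarrow> 'a)"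
    by (simp add: cochain_def)
  ultimately show ?thesis
    unfolding HHEq_def cohom_def by auto
qed

lemma HHCocycle_lift: "ExtCocycle sm cop eps n f \<Longrightarrow> HHCocycle sm n (lift sm cop n f)"
  unfolding ExtCocycle_def HHCocycle_def cocyc_def
  by (simp add: cochain_lift lift_opd[symmetric] lift_zero)

lemma HHEq_lift:
  assumes "ExtEq sm cop eps n f g"
  shows "HHEq sm n (lift sm cop n f) (lift sm cop n g)"
proof (cases "n = 0")
  case True
  then show ?thesis using assms by (simp add: ExtEq_def HHEq_def cohom_def)
next
  case False
  then obtain h where h: "cochain sm (*) (n - 1) h"
    and fg: "f - g = opd (OA_comp sm cop) (OA_mu eps) (n - 1) h"
    using assms by (auto simp: ExtEq_def cohom_def)
  have "lift sm cop n f - lift sm cop n g = opd End_comp End_mu (n - 1) (lift sm cop (n - 1) h)"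
    using False lift_opd[OF h] by (simp add: lift_diff[symmetric] fg)
  then show ?thesis
    using False cochain_lift[OF h] by (auto simp: HHEq_def cohom_def)
qed

lemma ExtEq_of_HHEq_lift:
  assumes f: "cochain sm (*) n f" and g: "cochain sm (*) n g"
    and "HHEq sm n (lift sm cop n f) (lift sm cop n g)"
  shows "ExtEq sm cop eps n f g"
proof (cases "n = 0")
  case True
  then show ?thesis
    using assms eps_comp_lift[OF f] eps_comp_lift[OF g] by (simp add: ExtEq_def HHEq_def cohom_def)
next
  case False
  then obtain H where H: "cochain sm sm (n - 1) H"
    and fg: "lift sm cop n f - lift sm cop n g = opd End_comp End_mu (n - 1) H"
    using assms(3) by (auto simp: HHEq_def cohom_def)
  have "f - g = eps \<circ> (lift sm cop n f - lift sm cop n g)"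
    by (simp add: eps_comp_diff eps_comp_lift[OF f] eps_comp_lift[OF g])
  also have "\<dots> = opd (OA_comp sm cop) (OA_mu eps) (n - 1) (eps \<circ> H)"
    by (simp only: fg eps_comp_opd[OF H])
  finally show ?thesis
    using False cochain_eps_comp[OF H] unfolding ExtEq_def cohom_def by auto
qed

lemma lift_OA_e: "lift sm cop 0 OA_e = End_e"
  by (simp add: fun_eq_iff lift_def OA_e_def End_e_def)

lemma lift_opcup:
  assumes "cochain sm (*) m f" "cochain sm (*) n g"
  shows "lift sm cop (m + n) (opcup (OA_comp sm cop) (OA_mu eps) m n f g)
       = opcup End_comp End_mu m n (lift sm cop m f) (lift sm cop n g)"
  using lift_OA_comp[OF cochain_OA_comp_mu_1[OF assms(1)] assms(2), of "m + 1"]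
    lift_OA_comp[OF cochain_OA_mu assms(1), of 1]
  by (simp add: opcup_def lift_OA_mu)

lemma lift_opbr:
  assumes "cochain sm (*) m f" "cochain sm (*) n g"
  shows "lift sm cop (m + n - 1) (opbr (OA_comp sm cop) m n f g)
       = opbr End_comp m n (lift sm cop m f) (lift sm cop n g)"
proof -
  have "lift sm cop (m + n - 1) (OA_comp sm cop m n i f g) = End_comp m n i (lift sm cop m f) (lift sm cop n g)"
    and "lift sm cop (m + n - 1) (OA_comp sm cop n m i g f) = End_comp n m i (lift sm cop n g) (lift sm cop m f)"
    for i
    using lift_OA_comp[OF assms, of i] lift_OA_comp[OF assms(2,1), of i] by (simp_all add: add.commute)
  then show ?thesis
    unfolding opbr_def opbar_def by (simp only: lift_diff lift_sgnc lift_sum)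
qed

end

theorem theorem4p2:
  fixes sm :: "'k::comm_ring_1 \<Rightarrow> 'a::ring_1 \<Rightarrow> 'a"
    and cop :: "'a \<Rightarrow> ('a \<times> 'a) list"
    and eps :: "'a \<Rightarrow> 'k"
  assumes "bialgebra sm cop eps"
  shows
    "(\<forall>n f. cochain sm (*) n f \<longrightarrow> cochain sm sm n (lift sm cop n f))
   \<and> (\<forall>n f g. cochain sm (*) n f \<longrightarrow> cochain sm (*) n g \<longrightarrow>
        lift sm cop n (f + g) = lift sm cop n f + lift sm cop n g)
   \<and> (\<forall>n r f. cochain sm (*) n f \<longrightarrow>
        lift sm cop n (\<lambda>xs. r * f xs) = (\<lambda>xs. sm r (lift sm cop n f xs)))
   \<and> (\<forall>n f. ExtCocycle sm cop eps n f \<longrightarrow> HHCocycle sm n (lift sm cop n f))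
   \<and> (\<forall>n f g. ExtCocycle sm cop eps n f \<longrightarrow> ExtCocycle sm cop eps n g \<longrightarrow>
        ExtEq sm cop eps n f g \<longrightarrow> HHEq sm n (lift sm cop n f) (lift sm cop n g))
   \<and> (\<forall>n f g. ExtCocycle sm cop eps n f \<longrightarrow> ExtCocycle sm cop eps n g \<longrightarrow>
        HHEq sm n (lift sm cop n f) (lift sm cop n g) \<longrightarrow> ExtEq sm cop eps n f g)
   \<and> lift sm cop 0 OA_e = End_e
   \<and> (\<forall>m n f g. ExtCocycle sm cop eps m f \<longrightarrow> ExtCocycle sm cop eps n g \<longrightarrow>
        HHEq sm (m + n)
          (lift sm cop (m + n) (opcup (OA_comp sm cop) (OA_mu eps) m n f g))
          (opcup End_comp End_mu m n (lift sm cop m f) (lift sm cop n g)))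
   \<and> (\<forall>m n f g. ExtCocycle sm cop eps m f \<longrightarrow> ExtCocycle sm cop eps n g \<longrightarrow>
        HHEq sm (m + n - 1)
          (lift sm cop (m + n - 1) (opbr (OA_comp sm cop) m n f g))
          (opbr End_comp m n (lift sm cop m f) (lift sm cop n g)))"
proof -
  interpret bialg sm cop eps
    by (rule bialg.intro[OF assms])
  have cochain: "ExtCocycle sm cop eps n f \<Longrightarrow> cochain sm (*) n f" for n f
    by (simp add: ExtCocycle_def cocyc_def)
  show ?thesis
    by (intro conjI allI impI)
      (simp_all add: cochain_lift lift_add lift_scale HHCocycle_lift HHEq_lift ExtEq_of_HHEq_lift
        cochain lift_OA_e lift_opcup lift_opbr HHEq_refl del: One_nat_def)
qed

end
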